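(* Assume the setting and regularity hypotheses of the generalized Cramér–Rao theorem stated in the context, and suppose in addition that $f$ and $g$ form a pair of escort distributions of order $q>0$: $$f(x;\theta)=\frac{g(x;\theta)^q}{M_q[g;\theta]},\qquad g(x;\theta)=\frac{f(x;\theta)^{\bar q}}{M_{\bar q}[f;\theta]},\qquad \bar q=1/q,$$ where $M_q[g;\theta]=\int_X g(x;\theta)^q\,\mathrm{d}x$. Let $\alpha\ge1$, $\alpha^{-1}+\beta^{-1}=1$. Then for any estimator $\hat\theta$, $$\Big(\int_X\|\hat\theta(x)-\theta\|^{\alpha}g(x;\theta)\,\mathrm{d}x\Big)^{1/\alpha} I_{\beta,q}[f|g;\theta]^{1/\beta}\ \ge\ \Big|n+\nabla_\theta\cdot\int_X(\hat\theta(x)-\theta)f(x;\theta)\,\mathrm{d}x\Big|$$ (in escort notation: with $E$ the expectation under $g$ and $E_q$ the $q$-escort expectation, the left moment is $E[\|\hat\theta-\theta\|^\alpha]$ and the bias is $E_q[\hat\theta-\theta]$; equivalently, with $E$ the expectation under $f$, the left moment is $E_{\bar q}[\|\hat\theta-\theta\|^\alpha]$ and the bias is $E[\hat\theta-\theta]$), where the generalized $(\beta,q)$-Fisher information is $$I_{\beta,q}[f|g;\theta]=\frac{1}{M_q[g;\theta]^{\beta}}\int_X g(x;\theta)^{\beta(q-1)}\Big\|\nabla_\theta\ln\frac{g(x;\theta)^q}{M_q[g;\theta]}\Big\|_*^{\beta}g(x;\theta)\,\mathrm{d}x = M_{\bar q}[f;\theta]^{\beta}\int_X f(x;\theta)^{\beta(1-\bar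 q)}\|\nabla_\theta\ln f(x;\theta)\|_*^{\beta}\,g(x;\theta)\,\mathrm{d}x.$$ Equality holds if $\nabla_\theta\ln_{\bar q}f(x;\theta)=K\|\hat\theta(x)-\theta\|^{\alpha-1}\nabla_{\hat\theta(x)-\theta}\|\hat\theta(x)-\theta\|$ for some $K>0$.
   Context: Setting of the generalized Cramér–Rao theorem: $X\subseteq\mathbb{R}^m$, $\Theta\subseteq\mathbb{R}^n$ open, $\mathbb{R}^n$ equipped with a norm $\|\cdot\|$ and dual norm $\|Y\|_*=\sup_{\|X\|\le1}X\cdot Y$; $f(x;\theta),g(x;\theta)$ probability densities on $X$; $f$ jointly measurable, integrable in $x$, absolutely continuous in $\theta$ with locally integrable $\theta$-derivatives allowing differentiation under the integral; $\nabla_\theta f$ absolutely continuous with respect to $g$; $\hat\theta:X\to\mathbb{R}^n$ an estimator with all quantities finite. $\nabla_\theta\cdot$ is the divergence in $\theta$. The $q$-logarithm is $\ln_q(x)=\frac{x^{1-q}-1}{1-q}$ for $q\ne1$ and $\ln_1=\ln$. $\nabla_v\|v\|$ is the gradient of the norm at $v$. *)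

theory Defs
  imports "HOL-Analysis.Analysis" "HOL-Probability.Essential_Supremum"
begin

definition is_norm :: "('a::real_vector \<Rightarrow> real) \<Rightarrow> bool" where
  "is_norm N \<longleftrightarrow> (\<forall>x. 0 \<le> N x) \<and> (\<forall>x. N x = 0 \<longleftrightarrow> x = 0)
     \<and> (\<forall>c x. N (c *\<^sub>R x) = \<bar>c\<bar> * N x) \<and> (\<forall>x y. N (x + y) \<le> N x + N y)"

definition dual_norm :: "(real^'n \<Rightarrow> real) \<Rightarrow> real^'n \<Rightarrow> real" where
  "dual_norm N y = Sup {x \<bullet> y | x. N x \<le> 1}"

definition grad :: "(real^'n \<Rightarrow> real) \<Rightarrow> real^'n \<Rightarrow> real^'n" where
  "grad h t = (SOME G. (h has_derivative (\<lambda>v. G \<bullet> v)) (at t))"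

definition divergence :: "(real^'n \<Rightarrow> real^'n) \<Rightarrow> real^'n \<Rightarrow> real" where
  "divergence B t = (\<Sum>j\<in>UNIV. deriv (\<lambda>s. B (t + s *\<^sub>R axis j 1) $ j) 0)"

definition qlog :: "real \<Rightarrow> real \<Rightarrow> real" where
  "qlog q x = (if q = 1 then ln x else (x powr (1 - q) - 1) / (1 - q))"

definition qmass :: "(real^'m) set \<Rightarrow> real \<Rightarrow> (real^'m \<Rightarrow> real^'n \<Rightarrow> real) \<Rightarrow> real^'n \<Rightarrow> real" where
  "qmass X q h t = (LINT x:X|lebesgue. h x t powr q)"

definition fisher_info :: "(real^'n \<Rightarrow> real) \<Rightarrow> real \<Rightarrow> real \<Rightarrow> (real^'m) set
    \<Rightarrow> (real^'m \<Rightarrow> real^'n \<Rightarrow> real) \<Rightarrow> (real^'m \<Rightarrow> real^'n \<Rightarrow> real) \<Rightarrow> real^'n \<Rightarrow> real" where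
  "fisher_info N \<beta> q X f g t =
     qmass X (1/q) f t powr \<beta> *
     (LINT x:X|lebesgue. f x t powr (\<beta> * (1 - 1/q))
        * dual_norm N (grad (\<lambda>s. ln (f x s)) t) powr \<beta> * g x t)"

text \<open>The function whose g-essential supremum is I_{infinity,q}^{1/infinity} (case alpha = 1,
  beta = infinity): M_{1/q}[f;t] f^{1-1/q} ||grad_t ln f||_*.\<close>
definition fisher_ess :: "(real^'n \<Rightarrow> real) \<Rightarrow> real \<Rightarrow> (real^'m) set
    \<Rightarrow> (real^'m \<Rightarrow> real^'n \<Rightarrow> real) \<Rightarrow> (real^'m \<Rightarrow> real^'n \<Rightarrow> real) \<Rightarrow> real^'n \<Rightarrow> ereal" where
  "fisher_ess N q X f g t =
     esssup (density lebesgue (\<lambda>x. indicator X x * ennreal (g x t)))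
       (\<lambda>x. ereal (qmass X (1/q) f t * f x t powr (1 - 1/q) * dual_norm N (grad (\<lambda>s. ln (f x s)) t)))"

definition fisher_root :: "(real^'n \<Rightarrow> real) \<Rightarrow> real \<Rightarrow> real \<Rightarrow> (real^'m) set
    \<Rightarrow> (real^'m \<Rightarrow> real^'n \<Rightarrow> real) \<Rightarrow> (real^'m \<Rightarrow> real^'n \<Rightarrow> real) \<Rightarrow> real^'n \<Rightarrow> real" where
  "fisher_root N \<alpha> q X f g t =
     (if \<alpha> = 1 then real_of_ereal (fisher_ess N q X f g t)
      else fisher_info N (\<alpha> / (\<alpha> - 1)) q X f g t powr ((\<alpha> - 1) / \<alpha>))"

end

theory Submission
  imports Defs
begin

text \<open>Let e = est - theta, F = grad_theta f, and let h = M_{1/q}[f] f^(1-1/q) ||grad ln f||_* be the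
  escort score norm.  The proof has three ingredients.
  (1) The bias identity: n + div_theta int f (est - theta) = int e . F, obtained by differentiating
      int f = 1 and the coordinates of the bias under the integral sign.
  (2) The escort factorisation F = g M f^(1-1/q) grad ln f, which with the generalized
      Cauchy--Schwarz inequality  |x . y| <= ||x|| ||y||_*  gives the pointwise bound
      |e . F| <= ||e|| h g.
  (3) Hoelder's inequality with weight g (or, for alpha = 1, the essential supremum bound):
      int ||e|| h g <= (int ||e||^alpha g)^(1/alpha) ||h||_{L^beta(g)}, and the last factor is
      the root of the generalized Fisher information.
  For the equality case, the hypothesis grad ln_{1/q} f = K ||e||^(alpha-1) grad||e|| makes
  e . F = M K ||e||^alpha g and h = M K ||e||^(alpha-1), the extremal pair of Hoelder's
  inequality.\<close>

lemma is_normD: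
  assumes "is_norm N"
  shows "N 0 = 0" "\<And>x. N (- x) = N x" "\<And>x. 0 \<le> N x" "\<And>x y. N (x + y) \<le> N x + N y"
    "\<And>c x. N (c *\<^sub>R x) = \<bar>c\<bar> * N x" "\<And>x. N x = 0 \<longleftrightarrow> x = 0"
  using assms unfolding is_norm_def
  by (simp_all, metis abs_minus_cancel abs_one mult_1 scaleR_minus1_left)

lemma is_norm_pos: "is_norm N \<Longrightarrow> x \<noteq> 0 \<Longrightarrow> N x > 0"
  using is_normD(3,6) by (metis less_eq_real_def)

text \<open>A norm is convex; this gives the supporting-hyperplane property of its gradient.\<close>
lemma is_norm_convex:
  assumes "is_norm N"
  shows "convex_on UNIV N"
proof (rule convex_onI)
  fix t :: real and x y :: 'a assume t: "0 < t" "t < 1"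
  have "N ((1 - t) *\<^sub>R x + t *\<^sub>R y) \<le> N ((1 - t) *\<^sub>R x) + N (t *\<^sub>R y)"
    using is_normD(4)[OF assms] .
  also have "\<dots> = (1 - t) * N x + t * N y" using is_normD(5)[OF assms] t by simp
  finally show "N ((1 - t) *\<^sub>R x + t *\<^sub>R y) \<le> (1 - t) * N x + t * N y" .
qed auto

lemma is_norm_sum:
  assumes "is_norm N"
  shows "N (sum f A) \<le> (\<Sum>i\<in>A. N (f i))"
proof (induction A rule: infinite_finite_induct)
  case (insert x F)
  then show ?case using is_normD(4)[OF assms, of "f x" "sum f F"] by simp
qed (simp_all add: is_normD(1)[OF assms])

lemma is_norm_le_norm:
  fixes N :: "'a::euclidean_space \<Rightarrow> real"
  assumes N: "is_norm N"
  shows "\<exists>C\<ge>0. \<forall>x. N x \<le> C * norm x"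
proof -
  define C where "C = (\<Sum>b\<in>Basis. N b)"
  have "N x \<le> C * norm x" for x
  proof -
    have "N x \<le> (\<Sum>b\<in>Basis. N ((x \<bullet> b) *\<^sub>R b))"
      using is_norm_sum[OF N, of "\<lambda>b. (x \<bullet> b) *\<^sub>R b" Basis] by (simp add: euclidean_representation)
    also have "\<dots> \<le> (\<Sum>b\<in>Basis. norm x * N b)"
      by (intro sum_mono) (simp add: is_normD(3,5)[OF N] Basis_le_norm mult_right_mono)
    finally show ?thesis by (simp add: C_def sum_distrib_left mult.commute)
  qed
  moreover have "C \<ge> 0" unfolding C_def by (simp add: sum_nonneg is_normD(3)[OF N])
  ultimately show ?thesis by blast
qed

lemma is_norm_continuous:
  fixes N :: "'a::euclidean_space \<Rightarrow> real"
  assumes N: "is_norm N"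
  shows "continuous_on S N"
proof -
  obtain C where "C \<ge> 0" and C: "\<And>x. N x \<le> C * norm x" using is_norm_le_norm[OF N] by blast
  have "\<bar>N x - N y\<bar> \<le> C * dist x y" for x y
    using is_normD(4)[OF N, of y "x - y"] is_normD(4)[OF N, of x "y - x"]
      is_normD(2)[OF N, of "x - y"] C[of "x - y"] by (simp add: dist_norm abs_le_iff)
  then have "C-lipschitz_on S N"
    by (intro lipschitz_onI) (auto simp: dist_real_def \<open>C \<ge> 0\<close>)
  then show ?thesis using lipschitz_on_continuous_on by blast
qed

text \<open>All norms on a finite-dimensional space dominate the Euclidean one: N attains a
  positive minimum on the unit sphere.\<close>
lemma is_norm_ge_norm:
  fixes N :: "'a::euclidean_space \<Rightarrow> real"
  assumes N: "is_norm N"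
  shows "\<exists>c>0. \<forall>x. c * norm x \<le> N x"
proof -
  obtain z where z: "z \<in> sphere 0 1" "\<And>y. y \<in> sphere 0 1 \<Longrightarrow> N z \<le> N y"
    using continuous_attains_inf[OF compact_sphere _ is_norm_continuous[OF N], of 0 1]
    by (auto simp: sphere_eq_empty)
  have "N z * norm x \<le> N x" for x
  proof (cases "x = 0")
    case False
    then have "N z \<le> N ((1 / norm x) *\<^sub>R x)" by (intro z(2)) auto
    then show ?thesis using False by (simp add: is_normD(5)[OF N] field_simps)
  qed (simp add: is_normD(1)[OF N])
  moreover have "N z > 0" using z(1) by (intro is_norm_pos[OF N]) auto
  ultimately show ?thesis by blast
qed

text \<open>The set defining the dual norm is bounded above, so the dual norm is a genuine supremum.\<close>
lemma dual_norm_set_bdd: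
  fixes N :: "real^'n \<Rightarrow> real"
  assumes N: "is_norm N"
  shows "bdd_above {x \<bullet> y | x. N x \<le> 1}"
proof -
  obtain c where c: "c > 0" "\<And>x. c * norm x \<le> N x" using is_norm_ge_norm[OF N] by blast
  have "x \<bullet> y \<le> norm y / c" if "N x \<le> 1" for x
  proof -
    have "norm x \<le> 1 / c" using c that order_trans[OF c(2)] by (simp add: field_simps)
    then have "norm x * norm y \<le> (1 / c) * norm y" by (rule mult_right_mono) simp
    then show ?thesis using norm_cauchy_schwarz[of x y] by simp
  qed
  then show ?thesis unfolding bdd_above_def by blast
qed

lemma dual_norm_nonneg:
  fixes N :: "real^'n \<Rightarrow> real"
  assumes N: "is_norm N"
  shows "0 \<le> dual_norm N y"
proof -
  have "0 = (0::real^'n) \<bullet> y \<and> N 0 \<le> 1" using is_normD(1)[OF N] by simp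
  then have "0 \<in> {x \<bullet> y | x. N x \<le> 1}" by blast
  then show ?thesis unfolding dual_norm_def by (rule cSup_upper[OF _ dual_norm_set_bdd[OF N]])
qed

lemma dual_norm_inner_le:
  fixes N :: "real^'n \<Rightarrow> real"
  assumes N: "is_norm N"
  shows "x \<bullet> y \<le> N x * dual_norm N y"
proof (cases "x = 0")
  case False
  then have Nx: "N x > 0" by (rule is_norm_pos[OF N])
  have "N ((1 / N x) *\<^sub>R x) \<le> 1" using Nx by (simp add: is_normD(5)[OF N])
  then have "((1 / N x) *\<^sub>R x) \<bullet> y \<le> dual_norm N y"
    unfolding dual_norm_def by (intro cSup_upper[OF _ dual_norm_set_bdd[OF N]]) blast
  then show ?thesis using Nx by (simp add: field_simps)
qed (simp add: is_normD(1)[OF N])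

lemma dual_norm_abs_inner_le:
  fixes N :: "real^'n \<Rightarrow> real"
  assumes N: "is_norm N"
  shows "\<bar>x \<bullet> y\<bar> \<le> N x * dual_norm N y"
  using dual_norm_inner_le[OF N, of x y] dual_norm_inner_le[OF N, of "- x" y] is_normD(2)[OF N, of x]
  by (simp add: abs_le_iff)

text \<open>A gradient G of a norm at e is a supporting functional: G . x <= N x, with equality at e.
  This is the convexity of N read off at its tangent plane.\<close>
lemma norm_gradient_support:
  fixes N :: "'a::real_inner \<Rightarrow> real"
  assumes N: "is_norm N" and D: "(N has_derivative (\<lambda>h. G \<bullet> h)) (at e)"
  shows "G \<bullet> x \<le> N x" and "G \<bullet> e = N e"
proof -
  have above_tangent: "G \<bullet> v \<le> N (e + v) - N e" for v
  proof -
    define \<phi> where "\<phi> t = N (e + t *\<^sub>R v)" for t :: real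
    have cvx: "convex_on UNIV \<phi>"
    proof (rule convex_onI)
      fix u s t :: real assume "0 < u" "u < 1"
      have "e + ((1 - u) * s + u * t) *\<^sub>R v = (1 - u) *\<^sub>R (e + s *\<^sub>R v) + u *\<^sub>R (e + t *\<^sub>R v)"
        by (simp add: algebra_simps)
      then show "\<phi> ((1 - u) *\<^sub>R s + u *\<^sub>R t) \<le> (1 - u) * \<phi> s + u * \<phi> t"
        using convex_onD[OF is_norm_convex[OF N], of u "e + s *\<^sub>R v" "e + t *\<^sub>R v"] \<open>0 < u\<close> \<open>u < 1\<close>
        by (simp add: \<phi>_def)
    qed auto
    have line: "((\<lambda>t. e + t *\<^sub>R v) has_derivative (\<lambda>t. t *\<^sub>R v)) (at 0)"
      by (auto intro!: derivative_eq_intros)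
    have "(N has_derivative (\<lambda>h. G \<bullet> h)) (at (e + 0 *\<^sub>R v))" using D by simp
    from has_derivative_compose[OF line this]
    have "(\<phi> has_derivative (\<lambda>t. G \<bullet> (t *\<^sub>R v))) (at 0)" unfolding \<phi>_def .
    moreover have "(\<lambda>t. G \<bullet> (t *\<^sub>R v)) = (*) (G \<bullet> v)" by (auto simp: mult.commute)
    ultimately have "(\<phi> has_field_derivative (G \<bullet> v)) (at 0)"
      by (simp add: has_field_derivative_def)
    then have "\<phi> 1 - \<phi> 0 \<ge> (G \<bullet> v) * (1 - 0)"
      by (intro convex_on_imp_above_tangent[OF cvx]) auto
    then show ?thesis unfolding \<phi>_def by simp
  qed
  show "G \<bullet> x \<le> N x" using above_tangent[of x] is_normD(4)[OF N, of e x] by linarith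
  have "N (e + e) = 2 * N e" using is_normD(5)[OF N, of 2 e] by (simp add: scaleR_2)
  then show "G \<bullet> e = N e"
    using above_tangent[of "- e"] above_tangent[of e] is_normD(1)[OF N] by (simp add: inner_minus_right)
qed

lemma dual_norm_of_norm_gradient:
  fixes N :: "real^'n \<Rightarrow> real"
  assumes N: "is_norm N" and D: "(N has_derivative (\<lambda>h. G \<bullet> h)) (at e)" and e: "e \<noteq> 0"
    and c: "c \<ge> 0"
  shows "dual_norm N (c *\<^sub>R G) = c"
  unfolding dual_norm_def
proof (rule cSup_eq_maximum)
  have Ne: "N e > 0" using is_norm_pos[OF N e] .
  have "N ((1 / N e) *\<^sub>R e) \<le> 1" "((1 / N e) *\<^sub>R e) \<bullet> (c *\<^sub>R G) = c"
    using Ne norm_gradient_support(2)[OF N D] by (simp_all add: is_normD(5)[OF N] inner_commute)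
  then show "c \<in> {x \<bullet> c *\<^sub>R G |x. N x \<le> 1}" by (metis (mono_tags, lifting) mem_Collect_eq)
next
  fix y assume "y \<in> {x \<bullet> c *\<^sub>R G |x. N x \<le> 1}"
  then obtain x where "y = c * (G \<bullet> x)" "N x \<le> 1" by (auto simp: inner_commute)
  then show "y \<le> c" using norm_gradient_support(1)[OF N D, of x] c
    by (metis mult_left_mono mult.right_neutral order_trans)
qed

text \<open>A norm is never differentiable at the origin (it behaves like |t| along every line).\<close>
lemma norm_not_differentiable_at_0:
  fixes N :: "'a::real_normed_vector \<Rightarrow> real" and x :: 'a
  assumes N: "is_norm N" and x: "x \<noteq> 0"
  shows "\<not> (N has_derivative D) (at 0)"
proof
  assume D: "(N has_derivative D) (at 0)"
  define c where "c = N x"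
  have c: "c > 0" unfolding c_def by (rule is_norm_pos[OF N x])
  have line: "((\<lambda>t. t *\<^sub>R x) has_derivative (\<lambda>t. t *\<^sub>R x)) (at 0)"
    by (auto intro!: derivative_eq_intros)
  have "(N has_derivative D) (at (0 *\<^sub>R x))" using D by simp
  from has_derivative_compose[OF line this]
  have "((\<lambda>t. N (t *\<^sub>R x)) has_derivative (\<lambda>t. D (t *\<^sub>R x))) (at 0)" .
  moreover have "(\<lambda>t. N (t *\<^sub>R x)) = (\<lambda>t. \<bar>t\<bar> * c)"
    unfolding c_def using is_normD(5)[OF N] by auto
  ultimately have "((\<lambda>t::real. \<bar>t\<bar> * c) has_derivative (\<lambda>t. t * D x)) (at 0)"
    using linear_scale[OF has_derivative_linear[OF D]] by simp
  then have "((\<lambda>t::real. \<bar>t\<bar> * c) has_field_derivative D x) (at 0)"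
    unfolding has_field_derivative_def by (rule has_derivative_eq_rhs) (auto simp: mult.commute)
  then have L: "((\<lambda>h. \<bar>h\<bar> * c / h) \<longlongrightarrow> D x) (at 0)" unfolding DERIV_def by simp
  have "((\<lambda>h. \<bar>h\<bar> * c / h) \<longlongrightarrow> D x) (at_right 0)" "((\<lambda>h. \<bar>h\<bar> * c / h) \<longlongrightarrow> D x) (at_left 0)"
    by (rule tendsto_mono[OF at_le L], simp)+
  moreover have "((\<lambda>h::real. \<bar>h\<bar> * c / h) \<longlongrightarrow> c) (at_right 0)"
    by (rule tendsto_eventually) (auto simp: eventually_at_right_field intro!: exI[of _ 1])
  moreover have "((\<lambda>h::real. \<bar>h\<bar> * c / h) \<longlongrightarrow> - c) (at_left 0)"
    by (rule tendsto_eventually) (auto simp: eventually_at_left_field intro!: exI[of _ "-1"])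
  ultimately have "D x = c" "D x = - c" by (auto intro: tendsto_unique[rotated])
  then show False using c by simp
qed

lemma integral_mult_eq_0_of_powr:
  fixes a b :: "'a \<Rightarrow> real"
  assumes "p > 0" "integrable M (\<lambda>x. a x powr p)" "integral\<^sup>L M (\<lambda>x. a x powr p) = 0"
  shows "integral\<^sup>L M (\<lambda>x. a x * b x) = 0"
proof -
  have "AE x in M. a x powr p = 0" using integral_nonneg_eq_0_iff_AE[OF assms(2)] assms(3) by simp
  then have "AE x in M. a x * b x = 0" by eventually_elim simp
  then show ?thesis by (rule integral_eq_zero_AE)
qed

text \<open>Hoelder's inequality for nonnegative real functions, derived from Young's inequality
  after normalising both factors.\<close>
lemma holder_inequality:
  fixes a b :: "'a \<Rightarrow> real"
  assumes p: "p > 1" and pq: "1/p + 1/q = 1"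
    and am: "a \<in> borel_measurable M" and a0: "\<And>x. 0 \<le> a x" and ai: "integrable M (\<lambda>x. a x powr p)"
    and bm: "b \<in> borel_measurable M" and b0: "\<And>x. 0 \<le> b x" and bi: "integrable M (\<lambda>x. b x powr q)"
  shows "integrable M (\<lambda>x. a x * b x)"
    and "integral\<^sup>L M (\<lambda>x. a x * b x)
         \<le> (integral\<^sup>L M (\<lambda>x. a x powr p)) powr (1/p) * (integral\<^sup>L M (\<lambda>x. b x powr q)) powr (1/q)"
proof -
  have q: "q > 1"
  proof -
    have "0 < 1 - 1/p" "1 - 1/p < 1" "1/q = 1 - 1/p" using p pq by (auto simp: field_simps)
    then have "0 < 1/q" "1/q < 1" by auto
    then show ?thesis by (simp add: field_simps split: if_splits)
  qed
  show int: "integrable M (\<lambda>x. a x * b x)"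
  proof (rule Bochner_Integration.integrable_bound[where f="\<lambda>x. a x powr p / p + b x powr q / q"])
    show "integrable M (\<lambda>x. a x powr p / p + b x powr q / q)" using ai bi by auto
    show "AE x in M. norm (a x * b x) \<le> norm (a x powr p / p + b x powr q / q)"
      using Youngs_inequality[OF p q pq a0 b0] a0 b0 p q by (auto intro!: AE_I2 simp: abs_mult)
  qed (use am bm in measurable)
  define A where "A = integral\<^sup>L M (\<lambda>x. a x powr p)"
  define B where "B = integral\<^sup>L M (\<lambda>x. b x powr q)"
  have "A \<ge> 0" "B \<ge> 0" unfolding A_def B_def by (simp_all add: Bochner_Integration.integral_nonneg)
  show "integral\<^sup>L M (\<lambda>x. a x * b x) \<le> A powr (1/p) * B powr (1/q)"
  proof (cases "A = 0 \<or> B = 0")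
    case True
    then have "integral\<^sup>L M (\<lambda>x. a x * b x) = 0"
      using integral_mult_eq_0_of_powr[of p M a b] integral_mult_eq_0_of_powr[of q M b a] ai bi p q
      unfolding A_def B_def by (auto simp: mult.commute)
    then show ?thesis by simp
  next
    case False
    then have Ap: "A > 0" and Bp: "B > 0" using \<open>A \<ge> 0\<close> \<open>B \<ge> 0\<close> by auto
    define s where "s = A powr (1/p)"
    define t where "t = B powr (1/q)"
    have st: "s > 0" "t > 0" "s powr p = A" "t powr q = B"
      unfolding s_def t_def using Ap Bp p q by (simp_all add: powr_powr)
    have young: "(a x / s) * (b x / t) \<le> a x powr p / (p * A) + b x powr q / (q * B)" for x
      using Youngs_inequality[OF p q pq, of "a x / s" "b x / t"] a0[of x] b0[of x] st
      by (simp add: powr_divide mult.commute)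
    have "integral\<^sup>L M (\<lambda>x. (a x / s) * (b x / t))
          \<le> integral\<^sup>L M (\<lambda>x. a x powr p / (p * A) + b x powr q / (q * B))"
      by (intro Bochner_Integration.integral_mono young) (use int ai bi in auto)
    also have "\<dots> = A / (p * A) + B / (q * B)" using ai bi unfolding A_def B_def by simp
    also have "\<dots> = 1" using Ap Bp pq by simp
    finally have "integral\<^sup>L M (\<lambda>x. a x * b x) / (s * t) \<le> 1" by simp
    then show ?thesis using st unfolding s_def t_def by (simp add: field_simps)
  qed
qed

lemma weighted_holder_inequality:
  fixes u h w :: "'a \<Rightarrow> real"
  assumes \<alpha>: "\<alpha> > 1" and \<beta>: "\<beta> = \<alpha> / (\<alpha> - 1)"
    and nonneg: "\<And>x. x \<in> space M \<Longrightarrow> 0 \<le> u x \<and> 0 \<le> h x \<and> 0 \<le> w x"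
    and ui: "integrable M (\<lambda>x. u x powr \<alpha> * w x)" and hi: "integrable M (\<lambda>x. h x powr \<beta> * w x)"
  shows "integrable M (\<lambda>x. u x * h x * w x)"
    and "integral\<^sup>L M (\<lambda>x. u x * h x * w x)
         \<le> (integral\<^sup>L M (\<lambda>x. u x powr \<alpha> * w x)) powr (1/\<alpha>) * (integral\<^sup>L M (\<lambda>x. h x powr \<beta> * w x)) powr (1/\<beta>)"
proof -
  have \<beta>1: "\<beta> > 1" and conj: "1/\<alpha> + 1/\<beta> = 1" using \<alpha> unfolding \<beta> by (auto simp: field_simps)
  define a where "a x = (u x powr \<alpha> * w x) powr (1/\<alpha>)" for x
  define b where "b x = (h x powr \<beta> * w x) powr (1/\<beta>)" for x
  have a_pow: "a x powr \<alpha> = u x powr \<alpha> * w x" and b_pow: "b x powr \<beta> = h x powr \<beta> * w x"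
    and ab: "a x * b x = u x * h x * w x" if "x \<in> space M" for x
  proof -
    have "w x powr (1/\<alpha>) * w x powr (1/\<beta>) = w x"
      using conj nonneg[OF that] by (simp add: powr_add[symmetric])
    then show "a x powr \<alpha> = u x powr \<alpha> * w x" "b x powr \<beta> = h x powr \<beta> * w x"
      "a x * b x = u x * h x * w x"
      unfolding a_def b_def using nonneg[OF that] \<alpha> \<beta>1 by (simp_all add: powr_mult powr_powr mult_ac)
  qed
  have am: "a \<in> borel_measurable M" and bm: "b \<in> borel_measurable M"
    unfolding a_def b_def using borel_measurable_integrable[OF ui] borel_measurable_integrable[OF hi]
    by measurable
  have ai: "integrable M (\<lambda>x. a x powr \<alpha>)" and bi: "integrable M (\<lambda>x. b x powr \<beta>)"
    using ui hi by (simp_all cong: Bochner_Integration.integrable_cong add: a_pow b_pow)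
  note H = holder_inequality[OF \<alpha> conj am _ ai bm _ bi, unfolded a_def b_def]
  show "integrable M (\<lambda>x. u x * h x * w x)"
    using H(1) by (simp cong: Bochner_Integration.integrable_cong add: ab[unfolded a_def b_def])
  show "integral\<^sup>L M (\<lambda>x. u x * h x * w x)
    \<le> (integral\<^sup>L M (\<lambda>x. u x powr \<alpha> * w x)) powr (1/\<alpha>) * (integral\<^sup>L M (\<lambda>x. h x powr \<beta> * w x)) powr (1/\<beta>)"
    using H(2) by (simp cong: Bochner_Integration.integral_cong add: ab[unfolded a_def b_def]
        a_pow[unfolded a_def] b_pow[unfolded b_def])
qed

lemma set_integral_restrict_space_iff:
  fixes f :: "'a \<Rightarrow> 'b::{banach, second_countable_topology}"
  assumes "X \<in> sets M"
  shows "set_integrable M X f \<longleftrightarrow> integrable (restrict_space M X) f"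
    and "(LINT x:X|M. f x) = integral\<^sup>L (restrict_space M X) f"
  using assms by (simp_all add: set_integrable_eq integral_restrict_space set_lebesgue_integral_def)

definition conj_Lnorm :: "real \<Rightarrow> 'a measure \<Rightarrow> 'a set \<Rightarrow> ('a \<Rightarrow> real) \<Rightarrow> ('a \<Rightarrow> real) \<Rightarrow> real" where
  "conj_Lnorm \<alpha> M X w h =
     (if \<alpha> = 1 then real_of_ereal (esssup (density M (\<lambda>x. indicator X x * ennreal (w x))) (\<lambda>x. ereal (h x)))
      else (LINT x:X|M. h x powr (\<alpha> / (\<alpha> - 1)) * w x) powr ((\<alpha> - 1) / \<alpha>))"

lemma AE_weighted_density_iff:
  fixes w :: "'a \<Rightarrow> real"
  assumes X: "X \<in> sets M" and w: "set_integrable M X w"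
  shows "(AE x in density M (\<lambda>x. indicator X x * ennreal (w x)). P x)
         \<longleftrightarrow> (AE x in restrict_space M X. 0 < w x \<longrightarrow> P x)"
proof -
  have "(\<lambda>x. ennreal (indicator X x *\<^sub>R w x)) \<in> borel_measurable M"
    using w unfolding set_integrable_def by measurable
  moreover have "(\<lambda>x. ennreal (indicator X x *\<^sub>R w x)) = (\<lambda>x. indicator X x * ennreal (w x))"
    by (auto simp: indicator_def)
  ultimately have "(AE x in density M (\<lambda>x. indicator X x * ennreal (w x)). P x)
                   \<longleftrightarrow> (AE x in M. 0 < indicator X x * ennreal (w x) \<longrightarrow> P x)"
    by (simp add: AE_density)
  also have "\<dots> \<longleftrightarrow> (AE x in M. x \<in> X \<longrightarrow> 0 < w x \<longrightarrow> P x)"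
    by (intro AE_cong) (auto simp: indicator_def)
  finally show ?thesis using X by (simp add: AE_restrict_space_iff)
qed

lemma integral_le_esssup_bound:
  fixes \<phi> u h w :: "'a \<Rightarrow> real"
  assumes \<phi>_int: "integrable M \<phi>" and uw_int: "integrable M (\<lambda>x. u x * w x)"
    and bound: "\<And>x. x \<in> space M \<Longrightarrow> \<bar>\<phi> x\<bar> \<le> u x * h x * w x"
    and nonneg: "\<And>x. x \<in> space M \<Longrightarrow> 0 \<le> u x \<and> 0 \<le> w x"
    and ess: "AE x in M. 0 < w x \<longrightarrow> h x \<le> E"
  shows "\<bar>integral\<^sup>L M \<phi>\<bar> \<le> integral\<^sup>L M (\<lambda>x. u x * w x) * E"
proof -
  have "AE x in M. \<bar>\<phi> x\<bar> \<le> u x * w x * E"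
  proof (rule AE_mp[OF ess AE_I2], intro impI)
    fix x assume x: "x \<in> space M" and hE: "0 < w x \<longrightarrow> h x \<le> E"
    have "u x * h x * w x \<le> u x * w x * E"
    proof (cases "w x = 0")
      case False
      then have "h x \<le> E" using hE nonneg[OF x] by simp
      then show ?thesis using nonneg[OF x] by (metis mult.commute mult.left_commute mult_left_mono mult_nonneg_nonneg)
    qed simp
    then show "\<bar>\<phi> x\<bar> \<le> u x * w x * E" using bound[OF x] by simp
  qed
  then have "integral\<^sup>L M (\<lambda>x. \<bar>\<phi> x\<bar>) \<le> integral\<^sup>L M (\<lambda>x. u x * w x * E)"
    using \<phi>_int uw_int by (intro integral_mono_AE) auto
  moreover have "\<bar>integral\<^sup>L M \<phi>\<bar> \<le> integral\<^sup>L M (\<lambda>x. \<bar>\<phi> x\<bar>)"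
    using integral_norm_bound[of M \<phi>] by simp
  moreover have "integral\<^sup>L M (\<lambda>x. u x * w x * E) = integral\<^sup>L M (\<lambda>x. u x * w x) * E" by simp
  ultimately show ?thesis by linarith
qed

lemma holder_conj_Lnorm:
  fixes \<phi> u h w :: "'a \<Rightarrow> real"
  assumes X: "X \<in> sets M" and \<alpha>: "\<alpha> \<ge> 1"
    and \<phi>_int: "set_integrable M X \<phi>" and bound: "\<And>x. x \<in> X \<Longrightarrow> \<bar>\<phi> x\<bar> \<le> u x * h x * w x"
    and nonneg: "\<And>x. x \<in> X \<Longrightarrow> 0 \<le> u x \<and> 0 \<le> h x \<and> 0 \<le> w x"
    and w_int: "set_integrable M X w" and u_int: "set_integrable M X (\<lambda>x. u x powr \<alpha> * w x)"
    and h_int: "\<alpha> > 1 \<Longrightarrow> set_integrable M X (\<lambda>x. h x powr (\<alpha> / (\<alpha> - 1)) * w x)"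
    and h_ess: "\<alpha> = 1 \<Longrightarrow> esssup (density M (\<lambda>x. indicator X x * ennreal (w x))) (\<lambda>x. ereal (h x)) < \<infinity>"
  shows "\<bar>LINT x:X|M. \<phi> x\<bar> \<le> (LINT x:X|M. u x powr \<alpha> * w x) powr (1/\<alpha>) * conj_Lnorm \<alpha> M X w h"
proof -
  define MX where "MX = restrict_space M X"
  note restrict = set_integral_restrict_space_iff[OF X, folded MX_def]
  have space: "space MX = X" using X unfolding MX_def by (simp add: sets.sets_into_space Int_absorb1)
  show ?thesis
  proof (cases "\<alpha> = 1")
    case False
    then have \<alpha>1: "\<alpha> > 1" using \<alpha> by simp
    note H = weighted_holder_inequality[OF \<alpha>1 refl, of MX u h w]
    have "\<bar>LINT x:X|M. \<phi> x\<bar> \<le> integral\<^sup>L MX (\<lambda>x. \<bar>\<phi> x\<bar>)"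
      using integral_norm_bound[of MX \<phi>] by (simp add: restrict)
    also have "\<dots> \<le> integral\<^sup>L MX (\<lambda>x. u x * h x * w x)"
      using H(1) \<phi>_int bound nonneg u_int h_int[OF \<alpha>1]
      by (intro Bochner_Integration.integral_mono) (auto simp: space restrict)
    also have "\<dots> \<le> (LINT x:X|M. u x powr \<alpha> * w x) powr (1/\<alpha>) * conj_Lnorm \<alpha> M X w h"
      using H(2) nonneg u_int h_int[OF \<alpha>1] False by (simp add: space restrict conj_Lnorm_def)
    finally show ?thesis .
  next
    case True
    define E where "E = esssup (density M (\<lambda>x. indicator X x * ennreal (w x))) (\<lambda>x. ereal (h x))"
    have "AE x in MX. 0 < w x \<longrightarrow> ereal (h x) \<le> E"
      using esssup_AE[where f="\<lambda>x. ereal (h x)" and M="density M (\<lambda>x. indicator X x * ennreal (w x))"]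
      unfolding E_def AE_weighted_density_iff[OF X w_int, folded MX_def] .
    moreover have "E < \<infinity>" using h_ess[OF True] unfolding E_def .
    ultimately have ess: "AE x in MX. 0 < w x \<longrightarrow> h x \<le> real_of_ereal E"
      by (auto elim!: eventually_mono) (cases E, auto)
    have u_pow: "u x powr \<alpha> * w x = u x * w x" if "x \<in> space MX" for x
      using True nonneg[of x] that by (simp add: space)
    have "integral\<^sup>L MX (\<lambda>x. u x powr \<alpha> * w x) = integral\<^sup>L MX (\<lambda>x. u x * w x)"
      by (rule Bochner_Integration.integral_cong[OF refl u_pow])
    moreover have "integral\<^sup>L MX (\<lambda>x. u x * w x) \<ge> 0"
      using nonneg by (intro Bochner_Integration.integral_nonneg) (simp add: space)
    moreover have "integrable MX (\<lambda>x. u x * w x)"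
      using u_int by (simp add: restrict) (metis (no_types, lifting) Bochner_Integration.integrable_cong u_pow)
    ultimately show ?thesis
      using integral_le_esssup_bound[of MX \<phi> u w h, OF _ _ _ _ ess] \<phi>_int bound nonneg True
      by (simp add: restrict space conj_Lnorm_def E_def)
  qed
qed

lemma weighted_density_nontrivial:
  fixes w :: "'a \<Rightarrow> real"
  assumes X: "X \<in> sets M" and w_int: "set_integrable M X w" and w0: "\<And>x. x \<in> X \<Longrightarrow> 0 \<le> w x"
    and w_nonzero: "(LINT x:X|M. w x) \<noteq> 0"
  shows "emeasure (density M (\<lambda>x. indicator X x * ennreal (w x)))
           (space (density M (\<lambda>x. indicator X x * ennreal (w x)))) \<noteq> 0"
    (is "emeasure ?D (space ?D) \<noteq> 0")
proof
  assume "emeasure ?D (space ?D) = 0"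
  then have "ae_filter ?D = bot" by (simp add: ae_filter_eq_bot_iff)
  then have "AE x in ?D. False" by (metis eventually_bot)
  then have "AE x in restrict_space M X. w x = 0"
    unfolding AE_weighted_density_iff[OF X w_int]
    by (rule AE_mp[OF _ AE_I2]) (use w0 X in \<open>force simp: sets.sets_into_space Int_absorb1\<close>)
  then have "(LINT x:X|M. w x) = 0"
    using integral_eq_zero_AE by (simp add: set_integral_restrict_space_iff(2)[OF X])
  then show False using w_nonzero by simp
qed

lemma conj_Lnorm_proportional:
  fixes u h w :: "'a \<Rightarrow> real"
  assumes X: "X \<in> sets M" and \<alpha>1: "\<alpha> > 1" and c: "c > 0"
    and extremal: "\<And>x. x \<in> X \<Longrightarrow> 0 < w x \<Longrightarrow> 0 < u x \<and> h x = c * u x powr (\<alpha> - 1)"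
    and nonneg: "\<And>x. x \<in> X \<Longrightarrow> 0 \<le> w x"
  shows "conj_Lnorm \<alpha> M X w h = c * (LINT x:X|M. u x powr \<alpha> * w x) powr ((\<alpha> - 1) / \<alpha>)"
proof -
  define I where "I = (LINT x:X|M. u x powr \<alpha> * w x)"
  have I0: "I \<ge> 0" unfolding I_def set_lebesgue_integral_def
    using nonneg by (intro Bochner_Integration.integral_nonneg) (simp add: indicator_def)
  define \<beta> where "\<beta> = \<alpha> / (\<alpha> - 1)"
  have \<alpha>\<beta>: "(\<alpha> - 1) * \<beta> = \<alpha>" "\<beta> > 0" unfolding \<beta>_def using \<alpha>1 by (auto simp: field_simps)
  have pointwise: "h x powr \<beta> * w x = c powr \<beta> * (u x powr \<alpha> * w x)" if x: "x \<in> X" for x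
  proof (cases "w x = 0")
    case False
    then have "0 < u x" "h x = c * u x powr (\<alpha> - 1)" using extremal[OF x] nonneg[OF x] by auto
    then show ?thesis using c by (simp add: powr_mult powr_powr \<alpha>\<beta>(1))
  qed simp
  have "(LINT x:X|M. h x powr \<beta> * w x) = (LINT x:X|M. c powr \<beta> * (u x powr \<alpha> * w x))"
    using pointwise by (intro set_lebesgue_integral_cong[OF X]) auto
  then have "conj_Lnorm \<alpha> M X w h = (c powr \<beta> * I) powr (1 / \<beta>)"
    using \<alpha>1 by (simp add: conj_Lnorm_def \<beta>_def I_def)
  also have "\<dots> = c * I powr ((\<alpha> - 1) / \<alpha>)"
    using c I0 \<alpha>1 \<alpha>\<beta>(2) by (simp add: powr_mult powr_powr \<beta>_def)
  finally show ?thesis unfolding I_def .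
qed

lemma conj_Lnorm_constant:
  fixes h w :: "'a \<Rightarrow> real"
  assumes X: "X \<in> sets M" and const: "\<And>x. x \<in> X \<Longrightarrow> 0 < w x \<Longrightarrow> h x = c"
    and w0: "\<And>x. x \<in> X \<Longrightarrow> 0 \<le> w x"
    and w_int: "set_integrable M X w" and w_nonzero: "(LINT x:X|M. w x) \<noteq> 0"
    and h_ess: "esssup (density M (\<lambda>x. indicator X x * ennreal (w x))) (\<lambda>x. ereal (h x)) < \<infinity>"
  shows "conj_Lnorm 1 M X w h = c"
proof -
  define D where "D = density M (\<lambda>x. indicator X x * ennreal (w x))"
  have "(\<lambda>x. ereal (h x)) \<in> borel_measurable D"
    using h_ess esssup_non_measurable[of "\<lambda>x. ereal (h x)" D] unfolding D_def
    by (metis order_less_irrefl top_ereal_def)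
  moreover have "AE x in D. ereal (h x) = ereal c"
    unfolding D_def AE_weighted_density_iff[OF X w_int]
    using const by (intro AE_I2) (force simp: X sets.sets_into_space Int_absorb1)
  ultimately have "esssup D (\<lambda>x. ereal (h x)) = esssup D (\<lambda>x. ereal c)"
    by (intro esssup_AE_cong) auto
  moreover have "emeasure D (space D) \<noteq> 0"
    unfolding D_def using w0 by (intro weighted_density_nontrivial[OF X w_int _ w_nonzero]) auto
  ultimately show ?thesis by (simp add: conj_Lnorm_def D_def[symmetric] esssup_const)
qed

lemma holder_conj_Lnorm_extremal:
  fixes u h w :: "'a \<Rightarrow> real"
  assumes X: "X \<in> sets M" and \<alpha>: "\<alpha> \<ge> 1" and c: "c > 0"
    and extremal: "\<And>x. x \<in> X \<Longrightarrow> 0 < w x \<Longrightarrow> 0 < u x \<and> h x = c * u x powr (\<alpha> - 1)"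
    and nonneg: "\<And>x. x \<in> X \<Longrightarrow> 0 \<le> u x \<and> 0 \<le> w x"
    and w_int: "set_integrable M X w" and w_nonzero: "(LINT x:X|M. w x) \<noteq> 0"
    and h_ess: "\<alpha> = 1 \<Longrightarrow> esssup (density M (\<lambda>x. indicator X x * ennreal (w x))) (\<lambda>x. ereal (h x)) < \<infinity>"
  shows "(LINT x:X|M. u x powr \<alpha> * w x) powr (1/\<alpha>) * conj_Lnorm \<alpha> M X w h
         = c * (LINT x:X|M. u x powr \<alpha> * w x)"
proof -
  define I where "I = (LINT x:X|M. u x powr \<alpha> * w x)"
  have I0: "I \<ge> 0" unfolding I_def set_lebesgue_integral_def
    using nonneg by (intro Bochner_Integration.integral_nonneg) (simp add: indicator_def)
  show ?thesis
  proof (cases "\<alpha> = 1")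
    case False
    then have \<alpha>1: "\<alpha> > 1" using \<alpha> by simp
    have "I powr (1/\<alpha>) * conj_Lnorm \<alpha> M X w h = c * I powr (1/\<alpha> + (\<alpha> - 1)/\<alpha>)"
      using conj_Lnorm_proportional[OF X \<alpha>1 c extremal] nonneg by (simp add: I_def powr_add)
    moreover have "1/\<alpha> + (\<alpha> - 1)/\<alpha> = 1" using \<alpha>1 by (simp add: field_simps)
    ultimately show ?thesis using I0 unfolding I_def by simp
  next
    case True
    have "h x = c" if "x \<in> X" "0 < w x" for x using extremal[OF that] True by simp
    then have "conj_Lnorm \<alpha> M X w h = c"
      using conj_Lnorm_constant[OF X _ _ w_int w_nonzero h_ess[OF True]] nonneg True by blast
    then show ?thesis using True I0 unfolding I_def by simp
  qed
qed

lemma has_derivative_grad: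
  fixes h :: "real^'n \<Rightarrow> real"
  assumes "h differentiable (at t)"
  shows "(h has_derivative (\<lambda>v. grad h t \<bullet> v)) (at t)"
proof -
  obtain D where D: "(h has_derivative D) (at t)" using assms unfolding differentiable_def by blast
  have "D = (\<lambda>v. adjoint D 1 \<bullet> v)"
    using adjoint_works[OF has_derivative_linear[OF D]] by (auto simp: inner_commute)
  then have "\<exists>G. (h has_derivative (\<lambda>v. G \<bullet> v)) (at t)" using D by metis
  then show ?thesis unfolding grad_def by (rule someI_ex)
qed

lemma grad_eqI:
  fixes h :: "real^'n \<Rightarrow> real"
  assumes D: "(h has_derivative (\<lambda>v. G \<bullet> v)) (at t)"
  shows "grad h t = G"
proof -
  have "h differentiable (at t)" using D unfolding differentiable_def by blast
  then have "(\<lambda>v. grad h t \<bullet> v) = (\<lambda>v. G \<bullet> v)" by (rule has_derivative_unique[OF has_derivative_grad D])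
  then have "(grad h t - G) \<bullet> (grad h t - G) = 0" by (metis inner_diff_left right_minus_eq)
  then show ?thesis by simp
qed

lemma grad_chain:
  fixes u :: "real^'n \<Rightarrow> real"
  assumes u: "u differentiable (at t)" and \<phi>: "(\<phi> has_real_derivative d) (at (u t))"
  shows "grad (\<lambda>s. \<phi> (u s)) t = d *\<^sub>R grad u t"
proof (rule grad_eqI)
  have "((\<lambda>s. \<phi> (u s)) has_derivative (\<lambda>v. (grad u t \<bullet> v) * d)) (at t)"
    by (rule DERIV_compose_FDERIV[OF \<phi> has_derivative_grad[OF u]])
  then show "((\<lambda>s. \<phi> (u s)) has_derivative (\<lambda>v. (d *\<^sub>R grad u t) \<bullet> v)) (at t)"
    by (rule has_derivative_eq_rhs) (auto simp: mult.commute)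
qed

lemma qlog_has_real_derivative:
  assumes y: "y > 0"
  shows "(qlog r has_real_derivative y powr (- r)) (at y)"
proof (cases "r = 1")
  case True
  then show ?thesis using DERIV_ln[OF y] y by (simp add: qlog_def[abs_def] powr_minus)
next
  case False
  have "((\<lambda>y. (y powr (1 - r) - 1) / (1 - r)) has_real_derivative
          ((1 - r) * y powr (1 - r - 1) - 0) / (1 - r)) (at y)"
    by (intro DERIV_cdivide DERIV_diff DERIV_const has_real_derivative_powr[OF y])
  then show ?thesis using False by (simp add: qlog_def[abs_def])
qed

lemma bias_component:
  fixes f :: "'a \<Rightarrow> real" and est :: "'a \<Rightarrow> real^'n"
  assumes X: "X \<in> sets M" and f_int: "set_integrable M X f" and f1: "(LINT x:X|M. f x) = 1"
    and est_int: "set_integrable M X (\<lambda>x. f x *\<^sub>R est x)"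
  shows "(LINT x:X|M. f x *\<^sub>R (est x - t)) $ j = (LINT x:X|M. est x $ j * f x) - t $ j"
proof -
  note restrict = set_integral_restrict_space_iff[OF X]
  have fI: "integrable (restrict_space M X) f" and eI: "integrable (restrict_space M X) (\<lambda>x. f x *\<^sub>R est x)"
    using f_int est_int by (simp_all add: restrict)
  have "integrable (restrict_space M X) (\<lambda>x. f x *\<^sub>R (est x - t))"
    using Bochner_Integration.integrable_diff[OF eI integrable_scaleR_left[OF fI, of t]]
    by (simp add: algebra_simps)
  then have "(LINT x:X|M. f x *\<^sub>R (est x - t)) $ j
      = integral\<^sup>L (restrict_space M X) (\<lambda>x. est x $ j * f x - t $ j * f x)"
    unfolding restrict by (subst integral_bounded_linear[OF bounded_linear_vec_nth, symmetric])
      (auto simp: algebra_simps)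
  also have "\<dots> = (LINT x:X|M. est x $ j * f x) - t $ j"
    using fI f1 integrable_bounded_linear[OF bounded_linear_vec_nth eI, of j]
    by (simp add: restrict mult.commute Bochner_Integration.integral_diff)
  finally show ?thesis .
qed

text \<open>The score identity behind the bound: differentiating the constraint int f = 1 and the
  coordinates of the bias along each axis (differentiation under the integral being allowed)
  gives  n + div_t int f(x;t) (est x - t) dx = int (est x - theta) . grad_theta f(x;theta) dx.\<close>
lemma bias_identity:
  fixes X :: "(real^'m) set" and \<Theta> :: "(real^'n) set"
    and f :: "real^'m \<Rightarrow> real^'n \<Rightarrow> real" and est :: "real^'m \<Rightarrow> real^'n"
  assumes X_meas: "X \<in> sets lebesgue"
    and Theta_open: "open \<Theta>" and theta_in: "\<theta> \<in> \<Theta>"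
    and f_dens: "\<And>t. t \<in> \<Theta> \<Longrightarrow> set_integrable lebesgue X (\<lambda>x. f x t) \<and> (LINT x:X|lebesgue. f x t) = 1"
    and est_int: "\<And>t. t \<in> \<Theta> \<Longrightarrow> set_integrable lebesgue X (\<lambda>x. f x t *\<^sub>R est x)"
    and grad_int: "\<And>j. set_integrable lebesgue X (\<lambda>x. grad (\<lambda>t. f x t) \<theta> $ j)"
    and est_grad_int: "\<And>j. set_integrable lebesgue X (\<lambda>x. est x $ j * grad (\<lambda>t. f x t) \<theta> $ j)"
    and diff_int1: "\<And>j. ((\<lambda>s. LINT x:X|lebesgue. f x (\<theta> + s *\<^sub>R axis j 1))
                      has_real_derivative (LINT x:X|lebesgue. grad (\<lambda>t. f x t) \<theta> $ j)) (at 0)"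
    and diff_int2: "\<And>j. ((\<lambda>s. LINT x:X|lebesgue. est x $ j * f x (\<theta> + s *\<^sub>R axis j 1))
                      has_real_derivative (LINT x:X|lebesgue. est x $ j * grad (\<lambda>t. f x t) \<theta> $ j)) (at 0)"
  shows "set_integrable lebesgue X (\<lambda>x. (est x - \<theta>) \<bullet> grad (\<lambda>t. f x t) \<theta>)"
    and "real CARD('n) + divergence (\<lambda>t. LINT x:X|lebesgue. f x t *\<^sub>R (est x - t)) \<theta>
         = (LINT x:X|lebesgue. (est x - \<theta>) \<bullet> grad (\<lambda>t. f x t) \<theta>)"
proof -
  define F where "F x = grad (\<lambda>t. f x t) \<theta>" for x
  define D1 where "D1 j = (LINT x:X|lebesgue. F x $ j)" for j
  define D2 where "D2 j = (LINT x:X|lebesgue. est x $ j * F x $ j)" for j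
  define b where "b t = (LINT x:X|lebesgue. f x t *\<^sub>R (est x - t))" for t
  obtain \<epsilon> where "\<epsilon> > 0" and ball: "ball \<theta> \<epsilon> \<subseteq> \<Theta>"
    using Theta_open theta_in open_contains_ball by blast
  have line_in: "\<theta> + s *\<^sub>R axis j 1 \<in> \<Theta>" if "s \<in> ball 0 \<epsilon>" for s j
    using that ball by (auto simp: dist_norm)
  have D1_0: "D1 j = 0" for j
  proof -
    have "((\<lambda>s. 1::real) has_real_derivative D1 j) (at 0)"
      unfolding D1_def F_def using diff_int1[of j]
      by (rule has_field_derivative_transform_within_open[of _ _ _ "ball 0 \<epsilon>"])
         (use \<open>\<epsilon> > 0\<close> f_dens line_in in auto)
    then show ?thesis using DERIV_unique DERIV_const by blast
  qed
  have partial: "deriv (\<lambda>s. b (\<theta> + s *\<^sub>R axis j 1) $ j) 0 = D2 j - 1" for j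
  proof (rule DERIV_imp_deriv)
    have "((\<lambda>s. (LINT x:X|lebesgue. est x $ j * f x (\<theta> + s *\<^sub>R axis j 1)) - (\<theta> $ j + s))
            has_real_derivative D2 j - 1) (at 0)"
      unfolding D2_def F_def using diff_int2[of j] by (auto intro!: derivative_eq_intros)
    then show "((\<lambda>s. b (\<theta> + s *\<^sub>R axis j 1) $ j) has_real_derivative D2 j - 1) (at 0)"
      by (rule has_field_derivative_transform_within_open[of _ _ _ "ball 0 \<epsilon>"])
         (use \<open>\<epsilon> > 0\<close> line_in f_dens est_int in \<open>auto simp: b_def bias_component[OF X_meas] axis_def\<close>)
  qed
  define MX where "MX = restrict_space lebesgue X"
  note restrict = set_integral_restrict_space_iff[OF X_meas, folded MX_def]
  have gI: "integrable MX (\<lambda>x. F x $ j)" "integrable MX (\<lambda>x. est x $ j * F x $ j)" for j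
    using grad_int[of j] est_grad_int[of j] unfolding F_def by (simp_all add: restrict)
  have coordinates: "(\<lambda>x. (est x - \<theta>) \<bullet> F x) = (\<lambda>x. \<Sum>j\<in>UNIV. est x $ j * F x $ j - \<theta> $ j * F x $ j)"
    by (simp add: inner_vec_def algebra_simps)
  show "set_integrable lebesgue X (\<lambda>x. (est x - \<theta>) \<bullet> grad (\<lambda>t. f x t) \<theta>)"
    unfolding F_def[symmetric] restrict coordinates using gI by auto
  have "(LINT x:X|lebesgue. (est x - \<theta>) \<bullet> F x) = (\<Sum>j\<in>UNIV. D2 j - \<theta> $ j * D1 j)"
    unfolding restrict coordinates D1_def D2_def using gI
    by (simp add: Bochner_Integration.integral_sum Bochner_Integration.integral_diff)
  also have "\<dots> = real CARD('n) + divergence b \<theta>"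
    unfolding divergence_def partial D1_0 by (simp add: sum_subtractf)
  finally show "real CARD('n) + divergence (\<lambda>t. LINT x:X|lebesgue. f x t *\<^sub>R (est x - t)) \<theta>
         = (LINT x:X|lebesgue. (est x - \<theta>) \<bullet> grad (\<lambda>t. f x t) \<theta>)"
    unfolding b_def F_def ..
qed

text \<open>The normalising mass M_r[f] of an escort density is positive, since the escort density
  g = f^r / M_r[f] integrates to 1.\<close>
lemma escort_mass_pos:
  fixes f g :: "'a \<Rightarrow> real"
  assumes X: "X \<in> sets M"
    and escort: "\<And>x. x \<in> X \<Longrightarrow> g x = f x powr r / (LINT y:X|M. f y powr r)"
    and g1: "(LINT x:X|M. g x) = 1"
  shows "(LINT x:X|M. f x powr r) > 0"
proof -
  have "(LINT x:X|M. f x powr r) \<ge> 0"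
    unfolding set_lebesgue_integral_def by (intro Bochner_Integration.integral_nonneg) simp
  moreover have "(LINT x:X|M. f x powr r) \<noteq> 0"
  proof
    assume "(LINT x:X|M. f x powr r) = 0"
    then have "(LINT x:X|M. g x) = (LINT x:X|M. 0)"
      using escort by (intro set_lebesgue_integral_cong[OF X]) simp
    then show False using g1 by (simp add: set_lebesgue_integral_def)
  qed
  ultimately show ?thesis by simp
qed

text \<open>For an escort pair, the score factorises through the weight g:
  grad f = g M_{1/q}[f] f^(1-1/q) grad ln f, the relation that makes g the right weight in
  the Hoelder step.  At points where f = 0 both sides vanish by absolute continuity.\<close>
lemma escort_score:
  fixes u :: "real^'n \<Rightarrow> real"
  assumes u0: "0 \<le> u \<theta>" and u_diff: "u differentiable (at \<theta>)"
    and escort: "w = u \<theta> powr (1/q) / M" and M: "M > 0"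
    and abs_cont: "w = 0 \<Longrightarrow> grad u \<theta> = 0"
  shows "grad u \<theta> = (w * M * u \<theta> powr (1 - 1/q)) *\<^sub>R grad (\<lambda>s. ln (u s)) \<theta>"
proof (cases "u \<theta> = 0")
  case True
  then show ?thesis using abs_cont escort by simp
next
  case False
  then have pos: "u \<theta> > 0" using u0 by simp
  have "w * M * u \<theta> powr (1 - 1/q) = u \<theta>"
    using pos M by (simp add: escort powr_add[symmetric])
  then show ?thesis using pos by (simp add: grad_chain[OF u_diff DERIV_ln[OF pos]])
qed

text \<open>The pointwise form of the Cramer--Rao bound for an escort pair: by the factorisation of the
  score and the generalized Cauchy--Schwarz inequality, |e . grad f| <= ||e|| h g.\<close>
lemma escort_score_bound:
  fixes N :: "real^'n \<Rightarrow> real" and u :: "real^'n \<Rightarrow> real"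
  assumes N: "is_norm N" and u0: "0 \<le> u \<theta>" and u_diff: "u differentiable (at \<theta>)"
    and escort: "w = u \<theta> powr (1/q) / M" and M: "M > 0" and abs_cont: "w = 0 \<Longrightarrow> grad u \<theta> = 0"
  shows "\<bar>e \<bullet> grad u \<theta>\<bar> \<le> N e * (M * u \<theta> powr (1 - 1/q) * dual_norm N (grad (\<lambda>s. ln (u s)) \<theta>)) * w"
proof -
  define L where "L = grad (\<lambda>s. ln (u s)) \<theta>"
  define c where "c = w * M * u \<theta> powr (1 - 1/q)"
  have "grad u \<theta> = c *\<^sub>R L"
    unfolding c_def L_def by (rule escort_score[OF u0 u_diff escort M abs_cont])
  moreover have "c \<ge> 0" unfolding c_def escort using M by simp
  ultimately have "\<bar>e \<bullet> grad u \<theta>\<bar> \<le> c * (N e * dual_norm N L)"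
    by (simp add: abs_mult mult_left_mono dual_norm_abs_inner_le[OF N])
  then show ?thesis by (simp add: c_def L_def mult_ac)
qed

text \<open>The function h = M_{1/q}[f] f^(1-1/q) ||grad ln f||_* whose L^beta(g) norm is the
  (beta,q)-Fisher information.\<close>
definition escort_score_norm :: "(real^'n \<Rightarrow> real) \<Rightarrow> real \<Rightarrow> (real^'m) set
    \<Rightarrow> (real^'m \<Rightarrow> real^'n \<Rightarrow> real) \<Rightarrow> real^'n \<Rightarrow> real^'m \<Rightarrow> real" where
  "escort_score_norm N q X f \<theta> x =
     qmass X (1/q) f \<theta> * f x \<theta> powr (1 - 1/q) * dual_norm N (grad (\<lambda>s. ln (f x s)) \<theta>)"

lemma escort_score_norm_powr:
  fixes N :: "real^'n \<Rightarrow> real"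
  assumes N: "is_norm N" and M: "qmass X (1/q) f \<theta> > 0"
  shows "escort_score_norm N q X f \<theta> x powr \<beta> * g x \<theta>
         = qmass X (1/q) f \<theta> powr \<beta> * (f x \<theta> powr (\<beta> * (1 - 1/q))
             * dual_norm N (grad (\<lambda>s. ln (f x s)) \<theta>) powr \<beta> * g x \<theta>)"
  using M dual_norm_nonneg[OF N]
  by (simp add: escort_score_norm_def powr_mult powr_powr mult_ac)

lemma fisher_root_eq_conj_Lnorm:
  fixes N :: "real^'n \<Rightarrow> real"
  assumes N: "is_norm N" and M: "qmass X (1/q) f \<theta> > 0"
  shows "fisher_root N \<alpha> q X f g \<theta> = conj_Lnorm \<alpha> lebesgue X (\<lambda>x. g x \<theta>) (escort_score_norm N q X f \<theta>)"
    and "set_integrable lebesgue X (\<lambda>x. f x \<theta> powr (\<beta> * (1 - 1/q))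
             * dual_norm N (grad (\<lambda>s. ln (f x s)) \<theta>) powr \<beta> * g x \<theta>)
         \<Longrightarrow> set_integrable lebesgue X (\<lambda>x. escort_score_norm N q X f \<theta> x powr \<beta> * g x \<theta>)"
proof -
  have integral: "(LINT x:X|lebesgue. escort_score_norm N q X f \<theta> x powr \<beta>' * g x \<theta>)
      = qmass X (1/q) f \<theta> powr \<beta>' * (LINT x:X|lebesgue. f x \<theta> powr (\<beta>' * (1 - 1/q))
          * dual_norm N (grad (\<lambda>s. ln (f x s)) \<theta>) powr \<beta>' * g x \<theta>)" for \<beta>'
    by (simp add: escort_score_norm_powr[OF N M])
  show "fisher_root N \<alpha> q X f g \<theta> = conj_Lnorm \<alpha> lebesgue X (\<lambda>x. g x \<theta>) (escort_score_norm N q X f \<theta>)"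
  proof (cases "\<alpha> = 1")
    case True
    then show ?thesis by (simp add: fisher_root_def fisher_ess_def conj_Lnorm_def escort_score_norm_def)
  qed (simp add: fisher_root_def fisher_info_def conj_Lnorm_def integral)
  show "set_integrable lebesgue X (\<lambda>x. escort_score_norm N q X f \<theta> x powr \<beta> * g x \<theta>)"
    if "set_integrable lebesgue X (\<lambda>x. f x \<theta> powr (\<beta> * (1 - 1/q))
             * dual_norm N (grad (\<lambda>s. ln (f x s)) \<theta>) powr \<beta> * g x \<theta>)"
    unfolding escort_score_norm_powr[OF N M] using that by simp
qed

text \<open>Pointwise analysis of the equality condition: if grad ln_{1/q} f = K ||e||^(alpha-1) grad ||e||,
  then e . grad f = M K ||e||^alpha g and, where g > 0, the escort score norm equals
  M K ||e||^(alpha-1); these are exactly the extremal functions of Hoelder's inequality.\<close>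
lemma escort_extremal_pointwise:
  fixes N :: "real^'n \<Rightarrow> real" and u :: "real^'n \<Rightarrow> real"
  assumes N: "is_norm N" and u0: "0 \<le> u \<theta>" and u_diff: "u differentiable (at \<theta>)"
    and escort: "w = u \<theta> powr (1/q) / M" and M: "M > 0" and K: "K > 0"
    and abs_cont: "w = 0 \<Longrightarrow> grad u \<theta> = 0"
    and dN: "(N has_derivative (\<lambda>h. G \<bullet> h)) (at e)"
    and dq: "((\<lambda>t. qlog (1/q) (u t)) has_derivative (\<lambda>h. ((K * N e powr (\<alpha> - 1)) *\<^sub>R G) \<bullet> h)) (at \<theta>)"
  shows "e \<bullet> grad u \<theta> = M * K * (N e powr \<alpha> * w)"
    and "0 < w \<Longrightarrow> M * u \<theta> powr (1 - 1/q) * dual_norm N (grad (\<lambda>s. ln (u s)) \<theta>) = M * K * N e powr (\<alpha> - 1)"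
    and "N e > 0"
proof -
  have "e \<noteq> 0"
    using norm_not_differentiable_at_0[OF N, of "axis undefined 1"] dN by (metis axis_eq_0_iff zero_neq_one)
  then show Ne: "N e > 0" by (rule is_norm_pos[OF N])
  define c where "c = K * N e powr (\<alpha> - 1)"
  have c0: "c \<ge> 0" unfolding c_def using K by simp
  have extremal: "e \<bullet> grad u \<theta> = M * K * (N e powr \<alpha> * w)
      \<and> M * u \<theta> powr (1 - 1/q) * dual_norm N (grad (\<lambda>s. ln (u s)) \<theta>) = M * K * N e powr (\<alpha> - 1)"
    if pos: "u \<theta> > 0"
  proof
    have "c *\<^sub>R G = u \<theta> powr (- (1/q)) *\<^sub>R grad u \<theta>"
      using grad_eqI[OF dq] grad_chain[OF u_diff qlog_has_real_derivative[OF pos]] by (simp add: c_def)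
    then have "u \<theta> powr (1/q) *\<^sub>R (c *\<^sub>R G) = grad u \<theta>"
      using pos by (simp add: powr_minus)
    then have grad_u: "grad u \<theta> = (u \<theta> powr (1/q) * c) *\<^sub>R G" by simp
    have "e \<bullet> grad u \<theta> = u \<theta> powr (1/q) * c * N e"
      using norm_gradient_support(2)[OF N dN] by (simp add: grad_u inner_commute)
    also have "\<dots> = M * K * (N e powr \<alpha> * w)"
      using M Ne powr_add[of "N e" "\<alpha> - 1" 1] by (simp add: c_def escort)
    finally show "e \<bullet> grad u \<theta> = M * K * (N e powr \<alpha> * w)" .
    have "grad (\<lambda>s. ln (u s)) \<theta> = (u \<theta> powr (1/q - 1) * c) *\<^sub>R G"
      using grad_chain[OF u_diff DERIV_ln[OF pos]] pos by (simp add: grad_u powr_diff field_simps)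
    then have "dual_norm N (grad (\<lambda>s. ln (u s)) \<theta>) = u \<theta> powr (1/q - 1) * c"
      using dual_norm_of_norm_gradient[OF N dN \<open>e \<noteq> 0\<close>] c0 by simp
    then show "M * u \<theta> powr (1 - 1/q) * dual_norm N (grad (\<lambda>s. ln (u s)) \<theta>) = M * K * N e powr (\<alpha> - 1)"
      using pos by (simp add: c_def powr_add[symmetric])
  qed
  show "e \<bullet> grad u \<theta> = M * K * (N e powr \<alpha> * w)"
    using extremal abs_cont u0 escort by (cases "u \<theta> = 0") auto
  show "M * u \<theta> powr (1 - 1/q) * dual_norm N (grad (\<lambda>s. ln (u s)) \<theta>) = M * K * N e powr (\<alpha> - 1)"
    if "0 < w" using extremal that u0 escort by (cases "u \<theta> = 0") auto
qed

theorem corollary1: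
  fixes N :: "real^'n \<Rightarrow> real"
    and X :: "(real^'m) set" and \<Theta> :: "(real^'n) set"
    and f g :: "real^'m \<Rightarrow> real^'n \<Rightarrow> real"
    and est :: "real^'m \<Rightarrow> real^'n"
    and \<theta> :: "real^'n" and q \<alpha> :: real
  assumes norm: "is_norm N"
    and X_meas: "X \<in> sets lebesgue"
    and Theta_open: "open \<Theta>" and theta_in: "\<theta> \<in> \<Theta>"
    \<comment> \<open>f, g are probability densities on X for every parameter\<close>
    and f_dens: "\<And>t. t \<in> \<Theta> \<Longrightarrow> (\<forall>x\<in>X. 0 \<le> f x t) \<and> set_integrable lebesgue X (\<lambda>x. f x t)
                     \<and> (LINT x:X|lebesgue. f x t) = 1"
    and g_dens: "\<And>t. t \<in> \<Theta> \<Longrightarrow> (\<forall>x\<in>X. 0 \<le> g x t) \<and> set_integrable lebesgue X (\<lambda>x. g x t)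
                     \<and> (LINT x:X|lebesgue. g x t) = 1"
    \<comment> \<open>f jointly measurable\<close>
    and f_joint: "(\<lambda>p. f (fst p) (snd p)) \<in> borel_measurable (lborel \<Otimes>\<^sub>M lborel)"
    \<comment> \<open>escort pair of order q > 0\<close>
    and q_pos: "q > 0"
    and escort: "\<And>t x. t \<in> \<Theta> \<Longrightarrow> x \<in> X \<Longrightarrow>
                   f x t = g x t powr q / qmass X q g t \<and> g x t = f x t powr (1/q) / qmass X (1/q) f t"
    \<comment> \<open>differentiability of f in the parameter at theta\<close>
    and f_diff: "\<And>x. x \<in> X \<Longrightarrow> (\<lambda>t. f x t) differentiable (at \<theta>)"
    \<comment> \<open>grad_theta f absolutely continuous w.r.t. g\<close>
    and abs_cont: "\<And>x. x \<in> X \<Longrightarrow> g x \<theta> = 0 \<Longrightarrow> grad (\<lambda>t. f x t) \<theta> = 0"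
    \<comment> \<open>estimator: measurable, all quantities finite\<close>
    and est_meas: "est \<in> borel_measurable lebesgue"
    and est_int: "\<And>t. t \<in> \<Theta> \<Longrightarrow> set_integrable lebesgue X (\<lambda>x. f x t *\<^sub>R est x)"
    and grad_int: "\<And>j. set_integrable lebesgue X (\<lambda>x. grad (\<lambda>t. f x t) \<theta> $ j)"
    and est_grad_int: "\<And>j. set_integrable lebesgue X (\<lambda>x. est x $ j * grad (\<lambda>t. f x t) \<theta> $ j)"
    \<comment> \<open>differentiation under the integral sign is allowed\<close>
    and diff_int1: "\<And>j. ((\<lambda>s. LINT x:X|lebesgue. f x (\<theta> + s *\<^sub>R axis j 1))
                      has_real_derivative (LINT x:X|lebesgue. grad (\<lambda>t. f x t) \<theta> $ j)) (at 0)"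
    and diff_int2: "\<And>j. ((\<lambda>s. LINT x:X|lebesgue. est x $ j * f x (\<theta> + s *\<^sub>R axis j 1))
                      has_real_derivative (LINT x:X|lebesgue. est x $ j * grad (\<lambda>t. f x t) \<theta> $ j)) (at 0)"
    \<comment> \<open>alpha >= 1 and finiteness of the moment and of the Fisher information\<close>
    and alpha_ge: "\<alpha> \<ge> 1"
    and moment_int: "set_integrable lebesgue X (\<lambda>x. N (est x - \<theta>) powr \<alpha> * g x \<theta>)"
    and fisher_int: "\<alpha> > 1 \<Longrightarrow> set_integrable lebesgue X (\<lambda>x.
                        f x \<theta> powr (\<alpha> / (\<alpha> - 1) * (1 - 1/q))
                        * dual_norm N (grad (\<lambda>s. ln (f x s)) \<theta>) powr (\<alpha> / (\<alpha> - 1)) * g x \<theta>)"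
    and fisher_ess_fin: "\<alpha> = 1 \<Longrightarrow> fisher_ess N q X f g \<theta> < \<infinity>"
  shows "((LINT x:X|lebesgue. N (est x - \<theta>) powr \<alpha> * g x \<theta>) powr (1/\<alpha>)
           * fisher_root N \<alpha> q X f g \<theta>
         \<ge> \<bar>real CARD('n) + divergence (\<lambda>t. LINT x:X|lebesgue. f x t *\<^sub>R (est x - t)) \<theta>\<bar>)
    \<and> ((\<exists>K>0. \<forall>x\<in>X. \<exists>G. (N has_derivative (\<lambda>h. G \<bullet> h)) (at (est x - \<theta>))
              \<and> ((\<lambda>t. qlog (1/q) (f x t)) has_derivative
                    (\<lambda>h. ((K * N (est x - \<theta>) powr (\<alpha> - 1)) *\<^sub>R G) \<bullet> h)) (at \<theta>))
         \<longrightarrow> (LINT x:X|lebesgue. N (est x - \<theta>) powr \<alpha> * g x \<theta>) powr (1/\<alpha>)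
               * fisher_root N \<alpha> q X f g \<theta>
             = \<bar>real CARD('n) + divergence (\<lambda>t. LINT x:X|lebesgue. f x t *\<^sub>R (est x - t)) \<theta>\<bar>)"
proof -
  define e where "e x = est x - \<theta>" for x
  define F where "F x = grad (\<lambda>t. f x t) \<theta>" for x
  define h where "h = escort_score_norm N q X f \<theta>"
  define M where "M = qmass X (1/q) f \<theta>"
  define Mom where "Mom = (LINT x:X|lebesgue. N (e x) powr \<alpha> * g x \<theta>)"
  have f0: "\<And>x. x \<in> X \<Longrightarrow> 0 \<le> f x \<theta>" and g0: "\<And>x. x \<in> X \<Longrightarrow> 0 \<le> g x \<theta>"
    and g_int: "set_integrable lebesgue X (\<lambda>x. g x \<theta>)" and g1: "(LINT x:X|lebesgue. g x \<theta>) = 1"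
    using f_dens[OF theta_in] g_dens[OF theta_in] by auto
  have g_escort: "\<And>x. x \<in> X \<Longrightarrow> g x \<theta> = f x \<theta> powr (1/q) / M"
    using escort[OF theta_in] unfolding M_def by blast
  have M_pos: "M > 0"
    unfolding M_def qmass_def by (rule escort_mass_pos[OF X_meas _ g1]) (use g_escort in \<open>simp add: M_def qmass_def\<close>)
  have bias: "set_integrable lebesgue X (\<lambda>x. e x \<bullet> F x)"
    "real CARD('n) + divergence (\<lambda>t. LINT x:X|lebesgue. f x t *\<^sub>R (est x - t)) \<theta>
     = (LINT x:X|lebesgue. e x \<bullet> F x)"
    unfolding e_def F_def using f_dens
    by (intro bias_identity[OF X_meas Theta_open theta_in _ est_int grad_int est_grad_int diff_int1 diff_int2];
        blast)+
  note root = fisher_root_eq_conj_Lnorm[OF norm M_pos[unfolded M_def], folded h_def]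
  have score_bound: "\<And>x. x \<in> X \<Longrightarrow> \<bar>e x \<bullet> F x\<bar> \<le> N (e x) * h x * g x \<theta>"
    unfolding F_def h_def escort_score_norm_def M_def[symmetric]
    by (rule escort_score_bound[OF norm f0 f_diff g_escort M_pos abs_cont])
  have bound: "\<bar>LINT x:X|lebesgue. e x \<bullet> F x\<bar> \<le> Mom powr (1/\<alpha>) * fisher_root N \<alpha> q X f g \<theta>"
    unfolding Mom_def root(1)
    using bias(1) score_bound alpha_ge moment_int root(2)[of "\<alpha> / (\<alpha> - 1)" g, OF fisher_int] fisher_ess_fin g0 g_int M_pos
      dual_norm_nonneg[OF norm] is_normD(3)[OF norm]
    by (intro holder_conj_Lnorm[OF X_meas])
       (auto simp: e_def h_def escort_score_norm_def M_def fisher_ess_def conj_Lnorm_def)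
  have equality: "Mom powr (1/\<alpha>) * fisher_root N \<alpha> q X f g \<theta> = \<bar>LINT x:X|lebesgue. e x \<bullet> F x\<bar>"
    if equality_condition: "\<exists>K>0. \<forall>x\<in>X. \<exists>G. (N has_derivative (\<lambda>h. G \<bullet> h)) (at (e x))
              \<and> ((\<lambda>t. qlog (1/q) (f x t)) has_derivative
                    (\<lambda>h. ((K * N (e x) powr (\<alpha> - 1)) *\<^sub>R G) \<bullet> h)) (at \<theta>)"
  proof -
    obtain K where K: "K > 0" and KG: "\<forall>x\<in>X. \<exists>G. (N has_derivative (\<lambda>h. G \<bullet> h)) (at (e x))
              \<and> ((\<lambda>t. qlog (1/q) (f x t)) has_derivative
                    (\<lambda>h. ((K * N (e x) powr (\<alpha> - 1)) *\<^sub>R G) \<bullet> h)) (at \<theta>)"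
      using equality_condition by blast
    note extremal = escort_extremal_pointwise[OF norm f0 f_diff g_escort M_pos K abs_cont]
    have "(LINT x:X|lebesgue. e x \<bullet> F x) = (LINT x:X|lebesgue. M * K * (N (e x) powr \<alpha> * g x \<theta>))"
      using extremal(1) KG unfolding F_def by (intro set_lebesgue_integral_cong[OF X_meas]) blast
    moreover have "Mom powr (1/\<alpha>) * fisher_root N \<alpha> q X f g \<theta> = M * K * Mom"
      unfolding Mom_def root(1)
      using extremal(2,3) KG M_pos K alpha_ge g0 g_int g1 fisher_ess_fin is_normD(3)[OF norm]
      by (intro holder_conj_Lnorm_extremal[OF X_meas])
         (auto simp: fisher_ess_def h_def escort_score_norm_def M_def)
    moreover have "Mom \<ge> 0"
      unfolding Mom_def set_lebesgue_integral_def using g0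
      by (intro Bochner_Integration.integral_nonneg) (simp add: indicator_def)
    ultimately show ?thesis using M_pos K by (simp add: Mom_def)
  qed
  show ?thesis
    using bound equality unfolding Mom_def bias(2) e_def by blast
qed

end
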